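(* Let $n, r \geq 1$ and $q \geq 0$ be integers and let $\epsilon \in F(r,n)$ with $|\epsilon| = n$. Then \[(-1)^{n-r}\sum_{s_1, \ldots, s_r \geq 0} (-1)^{\sum_i s_i} \binom{n}{q - \sum_i s_i} \prod_{i=1}^r \left((s_i+1)^{\epsilon(i)} - s_i^{\epsilon(i)}\right) = (-1)^{n-q-r} \sum_{\substack{t \in F(r,q) \\ |t| = q}} \prod_{i=1}^r E(\epsilon(i), t(i)).\]
   Context: $F(r,k)$ denotes the set of functions $\epsilon: \{1,\ldots,r\} \to \{0,\ldots,k\}$, $|\epsilon| = \sum_i \epsilon(i)$. $E(m,j)$ is the Eulerian number (number of permutations of $\{1,\ldots,m\}$ with exactly $j$ descents) for $m \geq 1$, with $E(m,j) = 0$ if $m \leq 0$ or $j \notin\{0,\ldots,m-1\}$. Binomial coefficients $\binom{n}{j}$ vanish for $j<0$ or $j > n$, and $0^0 = 1$. *)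

theory Defs
  imports "HOL-Library.FuncSet" "HOL-Combinatorics.Permutations" Complex_Main
begin

definition Ffun :: "nat \<Rightarrow> nat \<Rightarrow> (nat \<Rightarrow> nat) set" where
  "Ffun r k = {1..r} \<rightarrow>\<^sub>E {0..k}"

definition fsize :: "nat \<Rightarrow> (nat \<Rightarrow> nat) \<Rightarrow> nat" where
  "fsize r e = (\<Sum>i=1..r. e i)"

definition eulerian :: "nat \<Rightarrow> nat \<Rightarrow> nat" where
  "eulerian m j = (if m = 0 then 0 else
     card {p. p permutes {1..m} \<and> card {i \<in> {1..<m}. p (Suc i) < p i} = j})"

definition binom_int :: "nat \<Rightarrow> int \<Rightarrow> nat" where
  "binom_int n j = (if j < 0 then 0 else n choose (nat j))"

end

(*
  Let A_m(x) = sum_j E(m,j) x^j be the Eulerian polynomial and G_m(x) = sum_s ((s+1)^m - s^m) x^s.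
  Inserting the letter m+1 into the permutations of {1..m} gives the recurrence
  A_{m+1} = (1 + m x) A_m + x (1 - x) A_m', which is also satisfied by
  (1 - x)^{m+2} sum_s (s+1)^{m+1} x^s because that series is the derivative of x sum_s (s+1)^m x^s.
  Hence Euler's identity sum_s (s+1)^m x^s = A_m(x) / (1 - x)^{m+1}, i.e. G_m(x) (1 - x)^m = A_m(x).
  Multiplying over i with m = eps(i), using sum_i eps(i) = n, substituting x -> -x and comparing
  the coefficients of x^q gives the theorem; the coefficient of x^a in prod_i G_{eps(i)} is a sum
  over the weak compositions of a into r parts.
*)
theory Submission
  imports Defs "HOL-Computational_Algebra.Formal_Power_Series" "HOL-Combinatorics.Multiset_Permutations"
begin

unbundle fps_syntax

section \<open>Descents and insertion of a maximal letter\<close>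

fun descents :: "'a::linorder list \<Rightarrow> nat" where
  "descents [] = 0"
| "descents [x] = 0"
| "descents (x # y # zs) = (if y < x then 1 else 0) + descents (y # zs)"

definition insert_at :: "nat \<Rightarrow> 'a \<Rightarrow> 'a list \<Rightarrow> 'a list" where
  "insert_at k x xs = take k xs @ x # drop k xs"

lemma insert_at_0 [simp]: "insert_at 0 x xs = x # xs"
  by (simp add: insert_at_def)

lemma insert_at_Suc_Cons [simp]: "insert_at (Suc k) x (y # ys) = y # insert_at k x ys"
  by (simp add: insert_at_def)

lemma length_insert_at [simp]: "length (insert_at k x xs) = Suc (length xs)"
  by (simp add: insert_at_def)

lemma set_insert_at [simp]: "set (insert_at k x xs) = insert x (set xs)"
  by (metis insert_at_def append_take_drop_id set_append list.simps(15) Un_insert_right)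

lemma nth_insert_at_self: "k \<le> length xs \<Longrightarrow> insert_at k x xs ! k = x"
  by (simp add: insert_at_def nth_append)

lemma remove1_insert_at: "x \<notin> set xs \<Longrightarrow> remove1 x (insert_at k x xs) = xs"
  by (auto simp: insert_at_def remove1_append dest: in_set_takeD)

lemma distinct_insert_at: "distinct (insert_at k x xs) \<longleftrightarrow> x \<notin> set xs \<and> distinct xs"
  unfolding insert_at_def
  by (subst (2 3) append_take_drop_id[of k xs, symmetric]) (auto simp del: append_take_drop_id)

text \<open>Inserting a maximal letter at the front or into an ascent creates one new descent;
  inserting it at the end or into a descent does not.\<close>

lemma sum_descents_insert_at_max:
  fixes f :: "nat \<Rightarrow> 'b::comm_ring_1" and xs :: "'a::linorder list"
  assumes "\<forall>y\<in>set xs. y < x"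
  shows "(\<Sum>k=0..length xs. f (descents (insert_at k x xs))) =
     (of_nat (descents xs) + 1) * f (descents xs)
     + (of_nat (length xs) - of_nat (descents xs)) * f (Suc (descents xs))"
  using assms
proof (induction xs arbitrary: f)
  case Nil
  then show ?case by simp
next
  case (Cons y ys)
  show ?case
  proof (cases ys)
    case Nil
    with Cons.prems show ?thesis by (auto simp: algebra_simps dest: order.asym)
  next
    case (Cons z zs)
    define c where "c = (if z < y then 1 else 0 :: nat)"
    define d where "d = descents ys"
    have y_less: "y < x" and z_less: "z < x"
      using Cons.prems \<open>ys = z # zs\<close> by auto
    have descents_Cons: "descents (y # ys) = c + d"
      by (simp add: c_def d_def \<open>ys = z # zs\<close>)
    have IH: "(\<Sum>k=0..length ys. f (c + descents (insert_at k x ys))) =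
        (of_nat d + 1) * f (c + d) + (of_nat (length ys) - of_nat d) * f (c + Suc d)"
      using Cons.IH[of "\<lambda>e. f (c + e)"] Cons.prems by (simp add: d_def)
    have deeper: "descents (y # insert_at k x ys) = c + descents (insert_at k x ys)"
      if "k \<ge> 1" for k
      using that by (cases k) (simp_all add: c_def \<open>ys = z # zs\<close>)
    have front: "descents (x # y # ys) = Suc (c + d)"
      and second: "descents (y # x # ys) = Suc d" and first: "descents (x # ys) = Suc d"
      using y_less z_less by (simp_all add: c_def d_def \<open>ys = z # zs\<close>)
    have "(\<Sum>k=0..length (y # ys). f (descents (insert_at k x (y # ys)))) =
        f (descents (x # y # ys)) + (\<Sum>k=0..length ys. f (descents (insert_at (Suc k) x (y # ys))))"
      by (simp only: length_Cons sum.atLeast0_atMost_Suc_shift insert_at_0 o_def)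
    also have "(\<Sum>k=0..length ys. f (descents (insert_at (Suc k) x (y # ys)))) =
        f (descents (y # x # ys)) + (\<Sum>k=1..length ys. f (c + descents (insert_at k x ys)))"
      by (simp add: sum.atLeast_Suc_atMost deeper cong: sum.cong_simp)
    also have "(\<Sum>k=1..length ys. f (c + descents (insert_at k x ys))) =
        (of_nat d + 1) * f (c + d) + (of_nat (length ys) - of_nat d) * f (c + Suc d) - f (c + Suc d)"
      using IH by (simp add: sum.atLeast_Suc_atMost first algebra_simps)
    also have "f (descents (x # y # ys)) + (f (descents (y # x # ys)) + \<dots>) =
        (of_nat (c + d) + 1) * f (c + d) + (of_nat (length (y # ys)) - of_nat (c + d)) * f (Suc (c + d))"
      unfolding front second by (cases "z < y") (simp_all add: c_def algebra_simps)
    finally show ?thesis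
      by (simp only: descents_Cons)
  qed
qed

lemma bij_betw_insert_at_permutations_of_set:
  assumes "x \<notin> A"
  shows "bij_betw (\<lambda>(xs, k). insert_at k x xs)
           (permutations_of_set A \<times> {0..card A}) (permutations_of_set (insert x A))"
proof (rule bij_betw_imageI)
  show "inj_on (\<lambda>(xs, k). insert_at k x xs) (permutations_of_set A \<times> {0..card A})"
  proof (rule inj_onI, clarify)
    fix xs k xs' k'
    assume xs: "xs \<in> permutations_of_set A" "k \<in> {0..card A}"
      and xs': "xs' \<in> permutations_of_set A" "k' \<in> {0..card A}"
      and eq: "insert_at k x xs = insert_at k' x xs'"
    have "xs = xs'"
      using arg_cong[OF eq, of "remove1 x"] xs(1) xs'(1) assms
      by (simp add: remove1_insert_at permutations_of_set_def)
    moreover have "k = k'"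
    proof -
      have len: "length xs = card A" "length xs' = card A"
        using xs(1) xs'(1) by (simp_all add: length_finite_permutations_of_set)
      have "distinct (insert_at k x xs)"
        using xs(1) assms by (simp add: distinct_insert_at permutations_of_set_def)
      moreover have "insert_at k x xs ! k = x" "insert_at k' x xs' ! k' = x"
        using xs(2) xs'(2) len by (simp_all add: nth_insert_at_self)
      ultimately show ?thesis
        using xs(2) xs'(2) len unfolding eq
        by (metis nth_eq_iff_index_eq length_insert_at le_imp_less_Suc atLeastAtMost_iff)
    qed
    ultimately show "xs = xs' \<and> k = k'" ..
  qed
next
  show "(\<lambda>(xs, k). insert_at k x xs) ` (permutations_of_set A \<times> {0..card A}) =
      permutations_of_set (insert x A)"
  proof
    show "(\<lambda>(xs, k). insert_at k x xs) ` (permutations_of_set A \<times> {0..card A})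
        \<subseteq> permutations_of_set (insert x A)"
      using assms by (auto simp: permutations_of_set_def distinct_insert_at)
  next
    show "permutations_of_set (insert x A)
        \<subseteq> (\<lambda>(xs, k). insert_at k x xs) ` (permutations_of_set A \<times> {0..card A})"
    proof
      fix ys assume ys: "ys \<in> permutations_of_set (insert x A)"
      then obtain as bs where split: "ys = as @ x # bs"
        by (metis insertI1 permutations_of_setD(1) split_list)
      have "as @ bs \<in> permutations_of_set A"
        using ys assms by (auto simp: permutations_of_set_def split)
      moreover from this have "length as \<in> {0..card A}"
        using length_finite_permutations_of_set by fastforce
      moreover have "ys = insert_at (length as) x (as @ bs)"
        by (simp add: insert_at_def split)
      ultimately show "ys \<in> (\<lambda>(xs, k). insert_at k x xs) ` (permutations_of_set A \<times> {0..card A})"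
        by force
    qed
  qed
qed

lemma sum_permutations_of_set_insert:
  assumes "x \<notin> A"
  shows "(\<Sum>ys\<in>permutations_of_set (insert x A). g ys) =
    (\<Sum>xs\<in>permutations_of_set A. \<Sum>k=0..card A. g (insert_at k x xs))"
  by (simp add: sum.reindex_bij_betw[OF bij_betw_insert_at_permutations_of_set[OF assms], symmetric]
      sum.cartesian_product prod.case_distrib)

section \<open>Eulerian polynomials\<close>

definition eulerian_poly :: "nat \<Rightarrow> 'a::comm_ring_1 fps" where
  "eulerian_poly m = (\<Sum>xs\<in>permutations_of_set {1..m}. fps_X ^ descents xs)"

lemma eulerian_poly_0: "eulerian_poly 0 = 1"
  by (simp add: eulerian_poly_def)

lemma eulerian_poly_Suc:
  "(eulerian_poly (Suc m) :: 'a::comm_ring_1 fps) =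
     (1 + of_nat m * fps_X) * eulerian_poly m + fps_X * (1 - fps_X) * fps_deriv (eulerian_poly m)"
proof -
  have deriv_X_power: "fps_deriv (fps_X ^ Suc k :: 'a fps) = of_nat (Suc k) * fps_X ^ k" for k
    by (simp only: fps_deriv_power' fps_deriv_fps_X diff_Suc_1 mult_1_right)
  have monomial: "(of_nat d + 1) * fps_X ^ d + (of_nat m - of_nat d) * fps_X ^ Suc d =
      (1 + of_nat m * fps_X) * fps_X ^ d + fps_X * (1 - fps_X) * fps_deriv (fps_X ^ d :: 'a fps)" for d
    by (cases d) (simp_all only: deriv_X_power, simp_all add: algebra_simps)
  have insert_max: "(\<Sum>k=0..m. fps_X ^ descents (insert_at k (Suc m) xs)) =
      (of_nat (descents xs) + 1) * fps_X ^ descents xs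
      + (of_nat m - of_nat (descents xs)) * (fps_X ^ Suc (descents xs) :: 'a fps)"
    if "xs \<in> permutations_of_set {1..m}" for xs
  proof -
    have "length xs = m" "\<forall>y\<in>set xs. y < Suc m"
      using that by (auto simp: length_finite_permutations_of_set permutations_of_set_def)
    then show ?thesis
      using sum_descents_insert_at_max[of xs "Suc m" "\<lambda>d. fps_X ^ d"] by simp
  qed
  have "(eulerian_poly (Suc m) :: 'a fps) =
      (\<Sum>xs\<in>permutations_of_set {1..m}. \<Sum>k=0..m. fps_X ^ descents (insert_at k (Suc m) xs))"
    using sum_permutations_of_set_insert[of "Suc m" "{1..m}"]
    by (simp add: eulerian_poly_def atLeastAtMostSuc_conv)
  also have "\<dots> = (\<Sum>xs\<in>permutations_of_set {1..m}.
      (of_nat (descents xs) + 1) * fps_X ^ descents xs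
      + (of_nat m - of_nat (descents xs)) * fps_X ^ Suc (descents xs))"
    by (intro sum.cong refl insert_max)
  also have "\<dots> = (1 + of_nat m * fps_X) * eulerian_poly m + fps_X * (1 - fps_X) * fps_deriv (eulerian_poly m)"
    by (simp only: monomial) (simp add: eulerian_poly_def sum.distrib sum_distrib_left fps_deriv_sum)
  finally show ?thesis .
qed

definition succ_powers_fps :: "nat \<Rightarrow> 'a::comm_ring_1 fps" where
  "succ_powers_fps m = Abs_fps (\<lambda>s. of_nat (Suc s) ^ m)"

lemma succ_powers_fps_Suc: "succ_powers_fps (Suc m) = fps_deriv (fps_X * succ_powers_fps m)"
  by (rule fps_ext) (simp add: succ_powers_fps_def fps_X_mult_nth algebra_simps)

lemma succ_powers_fps_mult_one_minus_X_power:
  "succ_powers_fps m * (1 - fps_X) ^ Suc m = eulerian_poly m"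
proof (induction m)
  case 0
  show ?case
    by (rule fps_ext) (simp add: succ_powers_fps_def eulerian_poly_0 fps_X_mult_nth algebra_simps)
next
  case (Suc m)
  define A :: "'a fps" where "A = eulerian_poly m"
  define K :: "'a fps" where "K = fps_X * succ_powers_fps m"
  define U :: "'a fps" where "U = (1 - fps_X) ^ Suc m"
  have KU: "K * U = fps_X * A"
    using Suc.IH by (simp add: K_def U_def A_def mult.assoc)
  have product_rule: "fps_deriv K * U = A + fps_X * fps_deriv A - K * fps_deriv U"
    using arg_cong[OF KU, of fps_deriv] by (simp add: algebra_simps)
  have U': "(1 - fps_X) * fps_deriv U = - of_nat (Suc m) * U"
    unfolding U_def by (simp only: fps_deriv_power' diff_Suc_1) (simp add: algebra_simps)
  have KU': "K * ((1 - fps_X) * fps_deriv U) = - of_nat (Suc m) * (fps_X * A)"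
    unfolding U' KU[symmetric] by (simp add: algebra_simps)
  have "succ_powers_fps (Suc m) * (1 - fps_X) ^ Suc (Suc m) = (1 - fps_X) * (fps_deriv K * U)"
    by (simp add: succ_powers_fps_Suc K_def U_def algebra_simps)
  also have "\<dots> = (1 - fps_X) * (A + fps_X * fps_deriv A) - K * ((1 - fps_X) * fps_deriv U)"
    unfolding product_rule by (simp add: algebra_simps)
  also have "\<dots> = (1 - fps_X) * (A + fps_X * fps_deriv A) + of_nat (Suc m) * (fps_X * A)"
    unfolding KU' by (simp add: algebra_simps)
  also have "\<dots> = eulerian_poly (Suc m)"
    by (simp add: eulerian_poly_Suc A_def algebra_simps)
  finally show ?case .
qed

lemma descents_conv_sum:
  "descents xs = (\<Sum>i<length xs - 1. if xs ! Suc i < xs ! i then 1 else 0)"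
  by (induction xs rule: descents.induct) (simp_all add: sum.lessThan_Suc_shift del: sum.lessThan_Suc)

lemma descents_map_upt:
  "descents (map p [1..<Suc m]) = card {i \<in> {1..<m}. p (Suc i) < p i}"
proof -
  have "{i \<in> {1..<m}. p (Suc i) < p i} = Suc ` {i \<in> {0..<m - 1}. p (Suc (Suc i)) < p (Suc i)}"
  proof (rule set_eqI)
    fix i
    show "i \<in> {i \<in> {1..<m}. p (Suc i) < p i} \<longleftrightarrow>
        i \<in> Suc ` {i \<in> {0..<m - 1}. p (Suc (Suc i)) < p (Suc i)}"
      by (cases i) (auto simp: image_iff)
  qed
  then have "card {i \<in> {1..<m}. p (Suc i) < p i} =
      (\<Sum>i<m - 1. if p (Suc (Suc i)) < p (Suc i) then 1 else 0)"
    by (simp add: card_image sum.If_cases Int_def lessThan_atLeast0)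
  then show ?thesis
    by (simp add: descents_conv_sum nth_map_upt del: upt_Suc)
qed

lemma bij_betw_map_permutes:
  assumes "distinct xs"
  shows "bij_betw (\<lambda>p. map p xs) {p. p permutes set xs} (permutations_of_set (set xs))"
proof -
  have inj: "inj_on (\<lambda>p. map p xs) {p. p permutes set xs}"
  proof (rule inj_onI)
    fix p p' assume p: "p \<in> {p. p permutes set xs}" and p': "p' \<in> {p. p permutes set xs}"
      and "map p xs = map p' xs"
    then have "p x = p' x" for x
      by (cases "x \<in> set xs") (auto simp: map_eq_conv permutes_not_in)
    then show "p = p'" ..
  qed
  have image: "(\<lambda>p. map p xs) ` {p. p permutes set xs} \<subseteq> permutations_of_set (set xs)"
    using assms by (auto simp: permutations_of_set_def permutes_image distinct_map permutes_inj_on)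
  have "card ((\<lambda>p. map p xs) ` {p. p permutes set xs}) = card (permutations_of_set (set xs))"
    using assms by (simp add: card_image[OF inj] card_permutations distinct_card)
  with inj image show ?thesis
    by (simp add: bij_betw_def card_subset_eq)
qed

lemma eulerian_poly_nth:
  assumes "m \<ge> 1"
  shows "(eulerian_poly m :: 'a::comm_ring_1 fps) $ j = of_nat (eulerian m j)"
proof -
  let ?descents = "\<lambda>p. descents (map p [1..<Suc m])"
  have bij: "bij_betw (\<lambda>p. map p [1..<Suc m]) {p. p permutes {1..m}} (permutations_of_set {1..m})"
    using bij_betw_map_permutes[of "[1..<Suc m]"]
    by (simp only: distinct_upt set_upt atLeastLessThanSuc_atLeastAtMost)
  have "(eulerian_poly m :: 'a fps) = (\<Sum>p | p permutes {1..m}. fps_X ^ ?descents p)"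
    unfolding eulerian_poly_def by (rule sum.reindex_bij_betw[OF bij, symmetric])
  then have "(eulerian_poly m :: 'a fps) $ j = (\<Sum>p | p permutes {1..m}. if j = ?descents p then 1 else 0)"
    by (simp add: fps_sum_nth del: upt_Suc)
  also have "\<dots> = (\<Sum>p\<in>{p \<in> {p. p permutes {1..m}}. j = ?descents p}. 1)"
    by (rule sum.inter_filter[symmetric]) (simp add: finite_permutations)
  also have "{p \<in> {p. p permutes {1..m}}. j = ?descents p} = {p. p permutes {1..m} \<and> ?descents p = j}"
    by blast
  also have "(\<Sum>p\<in>\<dots>. 1) = of_nat (card {p. p permutes {1..m} \<and> ?descents p = j})"
    by (simp only: sum_constant mult.right_neutral)
  also have "\<dots> = of_nat (eulerian m j)"
    using assms unfolding eulerian_def descents_map_upt by simp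
  finally show ?thesis .
qed

text \<open>The empty permutation makes \<open>eulerian_poly 0 = 1\<close>, whereas \<^const>\<open>eulerian\<close>
  vanishes for \<open>m = 0\<close>; this series follows the latter convention.\<close>

definition eulerian_fps :: "nat \<Rightarrow> 'a::comm_ring_1 fps" where
  "eulerian_fps m = Abs_fps (\<lambda>j. of_nat (eulerian m j))"

definition power_diffs_fps :: "nat \<Rightarrow> 'a::comm_ring_1 fps" where
  "power_diffs_fps m = Abs_fps (\<lambda>s. of_nat (Suc s) ^ m - of_nat s ^ m)"

lemma power_diffs_fps_mult_one_minus_X_power:
  "(power_diffs_fps m :: 'a::comm_ring_1 fps) * (1 - fps_X) ^ m = eulerian_fps m"
proof (cases "m = 0")
  case True
  then show ?thesis
    by (simp add: power_diffs_fps_def eulerian_fps_def eulerian_def fps_zero_def)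
next
  case False
  have "(power_diffs_fps m :: 'a fps) = (1 - fps_X) * succ_powers_fps m"
    using False by (intro fps_ext) (simp add: power_diffs_fps_def succ_powers_fps_def fps_X_mult_nth
      power_0_left algebra_simps)
  then have "power_diffs_fps m * (1 - fps_X) ^ m = succ_powers_fps m * (1 - fps_X :: 'a fps) ^ Suc m"
    by (simp add: mult_ac)
  also have "\<dots> = eulerian_poly m"
    by (rule succ_powers_fps_mult_one_minus_X_power)
  also have "\<dots> = eulerian_fps m"
    using False by (intro fps_ext) (simp add: eulerian_poly_nth eulerian_fps_def)
  finally show ?thesis .
qed

section \<open>Coefficients of products of power series\<close>

definition weak_compositions :: "'a set \<Rightarrow> nat \<Rightarrow> ('a \<Rightarrow> nat) set" where
  "weak_compositions I n = {s \<in> I \<rightarrow>\<^sub>E {0..n}. sum s I = n}"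

lemma bij_betw_weak_compositions_multisets_of_size:
  assumes "finite I"
  shows "bij_betw (\<lambda>s. \<Sum>i\<in>I. replicate_mset (s i) i) (weak_compositions I n) (multisets_of_size I n)"
proof -
  have count_sum_replicate: "count (\<Sum>i\<in>I. replicate_mset (s i) i) x = (if x \<in> I then s x else 0)" for s x
    using assms by (simp add: count_sum)
  show ?thesis
  proof (rule bij_betw_imageI)
    show "inj_on (\<lambda>s. \<Sum>i\<in>I. replicate_mset (s i) i) (weak_compositions I n)"
    proof (rule inj_onI)
      fix s t assume s: "s \<in> weak_compositions I n" and t: "t \<in> weak_compositions I n"
        and eq: "(\<Sum>i\<in>I. replicate_mset (s i) i) = (\<Sum>i\<in>I. replicate_mset (t i) i)"
      have "s i = t i" if "i \<in> I" for i
        using arg_cong[OF eq, of "\<lambda>X. count X i"] that by (simp add: count_sum_replicate)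
      with s t show "s = t"
        unfolding weak_compositions_def by (blast intro: PiE_ext)
    qed
  next
    show "(\<lambda>s. \<Sum>i\<in>I. replicate_mset (s i) i) ` weak_compositions I n = multisets_of_size I n"
    proof (intro equalityI subsetI)
      fix X assume "X \<in> (\<lambda>s. \<Sum>i\<in>I. replicate_mset (s i) i) ` weak_compositions I n"
      then show "X \<in> multisets_of_size I n"
        using assms by (auto simp: weak_compositions_def multisets_of_size_def set_mset_sum)
    next
      fix X assume X: "X \<in> multisets_of_size I n"
      have X_eq: "X = (\<Sum>i\<in>I. replicate_mset (count X i) i)"
        using X by (intro multiset_eqI) (auto simp: count_sum_replicate multisets_of_size_def not_in_iff)
      have "restrict (count X) I \<in> weak_compositions I n"
      proof -
        have "sum (count X) I = n"
          using arg_cong[OF X_eq, of size] X by (simp add: multisets_of_size_def)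
        moreover have "count X i \<le> n" for i
          using X count_le_size[of X i] by (simp add: multisets_of_size_def)
        ultimately show ?thesis
          by (simp add: weak_compositions_def)
      qed
      moreover have "X = (\<Sum>i\<in>I. replicate_mset (restrict (count X) I i) i)"
        using X_eq by simp
      ultimately show "X \<in> (\<lambda>s. \<Sum>i\<in>I. replicate_mset (s i) i) ` weak_compositions I n"
        by blast
    qed
  qed
qed

lemma fps_prod_nth_weak_compositions:
  assumes "finite I"
  shows "(\<Prod>i\<in>I. f i) $ n = (\<Sum>s\<in>weak_compositions I n. \<Prod>i\<in>I. f i $ s i)"
proof -
  have "(\<Prod>i\<in>I. f i) $ n = (\<Sum>X\<in>multisets_of_size I n. \<Prod>i\<in>I. f i $ count X i)"
    by (rule fps_prod_nth'[OF assms])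
  also have "\<dots> =
      (\<Sum>s\<in>weak_compositions I n. \<Prod>i\<in>I. f i $ count (\<Sum>j\<in>I. replicate_mset (s j) j) i)"
    by (rule sum.reindex_bij_betw[OF bij_betw_weak_compositions_multisets_of_size[OF assms], symmetric])
  also have "\<dots> = (\<Sum>s\<in>weak_compositions I n. \<Prod>i\<in>I. f i $ s i)"
    using assms by (intro sum.cong prod.cong refl) (simp add: count_sum)
  finally show ?thesis .
qed

lemma weak_compositions_eq_PiE:
  assumes "finite I" "a \<le> q"
  shows "weak_compositions I a = {s \<in> I \<rightarrow>\<^sub>E {0..q}. sum s I = a}"
proof -
  have "s i \<le> sum s I" if "i \<in> I" for s :: "'a \<Rightarrow> nat" and i
    using assms(1) that by (intro member_le_sum) auto
  with assms(2) show ?thesis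
    unfolding weak_compositions_def by (force simp: PiE_iff)
qed

lemma sum_PiE_group_weak_compositions:
  fixes h :: "nat \<Rightarrow> 'b::comm_semiring_1"
  assumes "finite I" and "\<And>a. a > q \<Longrightarrow> h a = 0"
  shows "(\<Sum>s\<in>I \<rightarrow>\<^sub>E {0..q}. h (sum s I) * g s) =
    (\<Sum>a\<le>q. h a * (\<Sum>s\<in>weak_compositions I a. g s))"
proof -
  let ?S = "{s \<in> I \<rightarrow>\<^sub>E {0..q}. sum s I \<le> q}"
  have finite: "finite (I \<rightarrow>\<^sub>E {0..q})"
    using assms(1) by (simp add: finite_PiE)
  have "(\<Sum>s\<in>I \<rightarrow>\<^sub>E {0..q}. h (sum s I) * g s) = (\<Sum>s\<in>?S. h (sum s I) * g s)"
  proof (intro sum.mono_neutral_right[OF finite])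
    show "\<forall>s\<in>(I \<rightarrow>\<^sub>E {0..q}) - ?S. h (sum s I) * g s = 0"
      using assms(2) by (simp add: not_le)
  qed auto
  also have "\<dots> = (\<Sum>a\<le>q. \<Sum>s\<in>{s \<in> ?S. sum s I = a}. h (sum s I) * g s)"
    using finite by (intro sum.group[symmetric]) auto
  also have "\<dots> = (\<Sum>a\<le>q. h a * (\<Sum>s\<in>weak_compositions I a. g s))"
  proof (rule sum.cong)
    fix a assume "a \<in> {..q}"
    then have "{s \<in> ?S. sum s I = a} = weak_compositions I a"
      using weak_compositions_eq_PiE[OF assms(1), of a q] by auto
    then show "(\<Sum>s\<in>{s \<in> ?S. sum s I = a}. h (sum s I) * g s) =
        h a * (\<Sum>s\<in>weak_compositions I a. g s)"
      by (simp add: sum_distrib_left weak_compositions_def)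
  qed simp
  finally show ?thesis .
qed

lemma fps_nth_one_plus_X_power: "((1 + fps_X :: 'a::field_char_0 fps) ^ n) $ k = of_nat (n choose k)"
  by (simp flip: fps_binomial_of_nat add: binomial_gbinomial)

lemma fps_mult_one_minus_X_power_nth:
  fixes f g :: "'a::field_char_0 fps"
  assumes "f * (1 - fps_X) ^ n = g"
  shows "(\<Sum>a\<le>q. (-1) ^ a * f $ a * of_nat (n choose (q - a))) = (-1) ^ q * g $ q"
proof -
  have X0: "(- fps_X :: 'a fps) $ 0 = 0"
    by simp
  have "(f oo - fps_X) * (1 + fps_X) ^ n = (f oo - fps_X) * ((1 - fps_X) oo - fps_X) ^ n"
    by (simp add: fps_compose_sub_distrib)
  also have "\<dots> = g oo - fps_X"
    by (simp only: fps_compose_mult_distrib[OF X0] fps_compose_power[OF X0] assms[symmetric])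
  finally have "((f oo - fps_X) * (1 + fps_X) ^ n) $ q = (g oo - fps_X) $ q"
    by (rule arg_cong)
  then show ?thesis
    by (simp add: fps_mult_nth fps_compose_uminus' fps_nth_one_plus_X_power atLeast0AtMost)
qed

lemma Ffun_fsize_eq_weak_compositions: "{t \<in> Ffun r q. fsize r t = q} = weak_compositions {1..r} q"
  by (simp add: Ffun_def fsize_def weak_compositions_def)

lemma sum_Ffun_by_fsize:
  "(\<Sum>s\<in>Ffun r q. (-1) ^ fsize r s * real (binom_int n (int q - int (fsize r s))) * g s) =
   (\<Sum>a\<le>q. (-1) ^ a * (\<Sum>s\<in>weak_compositions {1..r} a. g s) * real (n choose (q - a)))"
proof -
  define h where "h a = (-1::real) ^ a * real (binom_int n (int q - int a))" for a
  have "(\<Sum>s\<in>Ffun r q. h (fsize r s) * g s) =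
      (\<Sum>a\<le>q. h a * (\<Sum>s\<in>weak_compositions {1..r} a. g s))"
    unfolding Ffun_def fsize_def by (rule sum_PiE_group_weak_compositions) (simp_all add: h_def binom_int_def)
  also have "\<dots> =
      (\<Sum>a\<le>q. (-1) ^ a * (\<Sum>s\<in>weak_compositions {1..r} a. g s) * real (n choose (q - a)))"
    by (intro sum.cong refl) (simp add: h_def binom_int_def flip: of_nat_diff)
  finally show ?thesis
    by (simp add: h_def mult.assoc)
qed

theorem proposition3p6:
  fixes n r q :: nat and eps :: "nat \<Rightarrow> nat"
  assumes "n \<ge> 1" and "r \<ge> 1"
    and "eps \<in> Ffun r n" and "fsize r eps = n"
  shows "(-1::real) powi (int n - int r) *
      (\<Sum>s\<in>Ffun r q. (-1::real) ^ (fsize r s) * real (binom_int n (int q - int (fsize r s))) *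
         (\<Prod>i=1..r. (real (s i) + 1) ^ (eps i) - real (s i) ^ (eps i)))
    = (-1::real) powi (int n - int q - int r) *
      (\<Sum>t\<in>{t\<in>Ffun r q. fsize r t = q}. \<Prod>i=1..r. real (eulerian (eps i) (t i)))"
proof -
  define G :: "real fps" where "G = (\<Prod>i=1..r. power_diffs_fps (eps i))"
  define E :: "real fps" where "E = (\<Prod>i=1..r. eulerian_fps (eps i))"
  have "n = (\<Sum>i=1..r. eps i)"
    using assms(4) by (simp add: fsize_def)
  then have "G * (1 - fps_X) ^ n = E"
    by (simp add: G_def E_def power_sum power_diffs_fps_mult_one_minus_X_power flip: prod.distrib)
  then have alternating: "(\<Sum>a\<le>q. (-1) ^ a * G $ a * real (n choose (q - a))) = (-1) ^ q * E $ q"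
    by (rule fps_mult_one_minus_X_power_nth)
  have G_nth: "G $ a = (\<Sum>s\<in>weak_compositions {1..r} a.
      \<Prod>i=1..r. (real (s i) + 1) ^ (eps i) - real (s i) ^ (eps i))" for a
    by (simp add: G_def fps_prod_nth_weak_compositions power_diffs_fps_def add.commute)
  have E_nth: "E $ q = (\<Sum>t\<in>{t\<in>Ffun r q. fsize r t = q}. \<Prod>i=1..r. real (eulerian (eps i) (t i)))"
    by (simp add: E_def fps_prod_nth_weak_compositions eulerian_fps_def Ffun_fsize_eq_weak_compositions)
  have sign: "(-1::real) powi (int n - int r) * (-1) ^ q = (-1) powi (int n - int q - int r)"
    using power_int_add[of "-1::real" "int n - int q - int r" "int q"] by (simp flip: power_add)
  show ?thesis
    unfolding sum_Ffun_by_fsize G_nth[symmetric] E_nth[symmetric] alternating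
    by (simp only: mult.assoc[symmetric] sign)
qed

end
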